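(* Let $M,N$ be $\mathtt{dBang}$ terms with $M\to_S N$ (one surface step). Then for every resource term $n\sqsubset N$ there is a resource term $m\sqsubset M$ such that $m$ reduces to $n$ in one surface resource step.
   Context: \textbf{dBang.} Terms: $M,N ::= x \mid \lambda x.M \mid MN \mid M[N/x] \mid\ !M \mid \mathrm{der}\,M$ ($M[N/x]$ explicit substitution binding $x$); $M\{N/x\}$ capture-avoiding substitution. List contexts $L ::= \square\mid L[N/x]$. Root rules: $L\langle\lambda x.M\rangle N \mapsto L\langle M[N/x]\rangle$; $M[L\langle !N\rangle/x]\mapsto L\langle M\{N/x\}\rangle$; $\mathrm{der}(L\langle !N\rangle)\mapsto L\langle N\rangle$. Surface contexts: $S ::= \square\mid\lambda x.S\mid SM\mid MS\mid S[M/x]\mid M[S/x]\mid\mathrm{der}\,S$; $\to_S$ is the closure of the root rules under surface contexts. \textbf{Resources.} Resource terms: $m,n ::= x\mid\lambda x.m\mid mn\mid m[n/x]\mid\mathrm{der}\,m\mid[m_1,\dots,m_k]$ ($k\ge0$ multisets). Resource list contexts $l::=\square\mid l[n/x]$. Root resource rules: $\mathrm{der}(l\langle[m]\rangle)\to l\langle m\rangle$; $\mathrm{der}(l\langle[m_1,\dots,m_k]\rangle)\to\emptyset$ if $k\ne1$; $l\langle\lambda x.m\rangle n\to l\langle m[n/x]\rangle$; $m[l\langle[n_1,\dots,n_k]\rangle/x]\to l\langle m\{n_{\sigma(1)}/x_1,\dots,n_{\sigma(k)}/x_k\}\rangle$ for every permutation $\sigma$ when $x_1,\dots,x_k$ are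 exactly the free occurrences of $x$ in $m$, and $\to\emptyset$ otherwise. Surface resource reduction is the closure under resource surface contexts $s::=\square\mid\lambda x.s\mid s n\mid m s\mid s[n/x]\mid m[s/x]\mid\mathrm{der}\,s$ (not inside bags). \textbf{Approximation.} $x\sqsubset x$; $\lambda x.m\sqsubset\lambda x.M$ if $m\sqsubset M$; $mn\sqsubset MN$ and $m[n/x]\sqsubset M[N/x]$ if $m\sqsubset M,n\sqsubset N$; $\mathrm{der}\,m\sqsubset\mathrm{der}\,M$ if $m\sqsubset M$; $[m_1,\dots,m_k]\sqsubset\ !M$ for any $k\ge0$ if every $m_i\sqsubset M$. *)

theory Defs
  imports Main "HOL-Library.Multiset"
begin

text \<open>Terms are represented with de Bruijn indices (terms up to alpha-equivalence).
  In both calculi the explicit substitution constructor ES t u stands for t[u/x]: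
  it binds index 0 in its first argument t, not in u.\<close>

datatype dterm =
    Var nat
  | Lam dterm
  | App dterm dterm
  | ES dterm dterm
  | Bang dterm
  | Der dterm

primrec lift :: "nat \<Rightarrow> nat \<Rightarrow> dterm \<Rightarrow> dterm" where
  "lift k c (Var i) = Var (if i < c then i else i + k)"
| "lift k c (Lam t) = Lam (lift k (Suc c) t)"
| "lift k c (App t u) = App (lift k c t) (lift k c u)"
| "lift k c (ES t u) = ES (lift k (Suc c) t) (lift k c u)"
| "lift k c (Bang t) = Bang (lift k c t)"
| "lift k c (Der t) = Der (lift k c t)"

primrec subst :: "dterm \<Rightarrow> nat \<Rightarrow> dterm \<Rightarrow> dterm" where
  "subst (Var i) x u = (if i = x then u else if x < i then Var (i - 1) else Var i)"
| "subst (Lam t) x u = Lam (subst t (Suc x) (lift 1 0 u))"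
| "subst (App t s) x u = App (subst t x u) (subst s x u)"
| "subst (ES t s) x u = ES (subst t (Suc x) (lift 1 0 u)) (subst s x u)"
| "subst (Bang t) x u = Bang (subst t x u)"
| "subst (Der t) x u = Der (subst t x u)"

text \<open>List contexts L = \<box>[N1/x1]...[Nk/xk], represented by the list [N1,...,Nk].\<close>
definition plug :: "dterm list \<Rightarrow> dterm \<Rightarrow> dterm" where
  "plug L t = foldl ES t L"

inductive root_step :: "dterm \<Rightarrow> dterm \<Rightarrow> bool" where
  dB: "root_step (App (plug L (Lam M)) N) (plug L (ES M (lift (length L) 0 N)))"
| sBang: "root_step (ES M (plug L (Bang N))) (plug L (subst (lift (length L) 1 M) 0 N))"
| dBang: "root_step (Der (plug L (Bang N))) (plug L N)"

inductive surf_step :: "dterm \<Rightarrow> dterm \<Rightarrow> bool" where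
  root: "root_step M N \<Longrightarrow> surf_step M N"
| lam: "surf_step M N \<Longrightarrow> surf_step (Lam M) (Lam N)"
| appL: "surf_step M N \<Longrightarrow> surf_step (App M P) (App N P)"
| appR: "surf_step M N \<Longrightarrow> surf_step (App P M) (App P N)"
| esL: "surf_step M N \<Longrightarrow> surf_step (ES M P) (ES N P)"
| esR: "surf_step M N \<Longrightarrow> surf_step (ES P M) (ES P N)"
| der: "surf_step M N \<Longrightarrow> surf_step (Der M) (Der N)"

datatype rterm =
    RVar nat
  | RLam rterm
  | RApp rterm rterm
  | RES rterm rterm
  | RDer rterm
  | RBag "rterm multiset"

primrec rlift :: "nat \<Rightarrow> nat \<Rightarrow> rterm \<Rightarrow> rterm" where
  "rlift k c (RVar i) = RVar (if i < c then i else i + k)"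
| "rlift k c (RLam t) = RLam (rlift k (Suc c) t)"
| "rlift k c (RApp t u) = RApp (rlift k c t) (rlift k c u)"
| "rlift k c (RES t u) = RES (rlift k (Suc c) t) (rlift k c u)"
| "rlift k c (RDer t) = RDer (rlift k c t)"
| "rlift k c (RBag B) = RBag (image_mset (rlift k c) B)"

text \<open>Linear substitution: lsubst m x B r holds iff r is obtained from m by replacing
  the free occurrences x_1,...,x_k of x in m by the elements of the bag B (of size
  exactly k), one element per occurrence, in some order (i.e. r = m{n_\<sigma>(1)/x_1,...,n_\<sigma>(k)/x_k}
  for some permutation \<sigma>); the variable x is removed. No r exists when the size of B
  differs from the number of free occurrences of x.\<close>
inductive lsubst :: "rterm \<Rightarrow> nat \<Rightarrow> rterm multiset \<Rightarrow> rterm \<Rightarrow> bool" where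
  var_hit: "lsubst (RVar x) x {#n#} n"
| var_miss: "i \<noteq> x \<Longrightarrow> lsubst (RVar i) x {#} (RVar (if x < i then i - 1 else i))"
| lam: "lsubst m (Suc x) (image_mset (rlift 1 0) B) r \<Longrightarrow> lsubst (RLam m) x B (RLam r)"
| app: "lsubst m x B1 r1 \<Longrightarrow> lsubst n x B2 r2 \<Longrightarrow> lsubst (RApp m n) x (B1 + B2) (RApp r1 r2)"
| es: "lsubst m (Suc x) (image_mset (rlift 1 0) B1) r1 \<Longrightarrow> lsubst n x B2 r2 \<Longrightarrow>
         lsubst (RES m n) x (B1 + B2) (RES r1 r2)"
| der: "lsubst m x B r \<Longrightarrow> lsubst (RDer m) x B (RDer r)"
| bag_empty: "lsubst (RBag {#}) x {#} (RBag {#})"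
| bag_add: "lsubst m x B1 r \<Longrightarrow> lsubst (RBag C) x B2 (RBag R) \<Longrightarrow>
         lsubst (RBag (add_mset m C)) x (B1 + B2) (RBag (add_mset r R))"

definition rplug :: "rterm list \<Rightarrow> rterm \<Rightarrow> rterm" where
  "rplug l t = foldl RES t l"

text \<open>Root resource reduction, as a relation between a term and each summand of its
  reduct (rules whose reduct is the empty sum relate the term to nothing).\<close>
inductive rroot_step :: "rterm \<Rightarrow> rterm \<Rightarrow> bool" where
  rder: "rroot_step (RDer (rplug l (RBag {#m#}))) (rplug l m)"
| rdB: "rroot_step (RApp (rplug l (RLam m)) n) (rplug l (RES m (rlift (length l) 0 n)))"
| rsub: "lsubst (rlift (length l) 1 m) 0 B r \<Longrightarrow> rroot_step (RES m (rplug l (RBag B))) (rplug l r)"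

inductive rsurf_step :: "rterm \<Rightarrow> rterm \<Rightarrow> bool" where
  root: "rroot_step m n \<Longrightarrow> rsurf_step m n"
| lam: "rsurf_step m n \<Longrightarrow> rsurf_step (RLam m) (RLam n)"
| appL: "rsurf_step m n \<Longrightarrow> rsurf_step (RApp m p) (RApp n p)"
| appR: "rsurf_step m n \<Longrightarrow> rsurf_step (RApp p m) (RApp p n)"
| esL: "rsurf_step m n \<Longrightarrow> rsurf_step (RES m p) (RES n p)"
| esR: "rsurf_step m n \<Longrightarrow> rsurf_step (RES p m) (RES p n)"
| der: "rsurf_step m n \<Longrightarrow> rsurf_step (RDer m) (RDer n)"

inductive approx :: "rterm \<Rightarrow> dterm \<Rightarrow> bool" where
  var: "approx (RVar x) (Var x)"
| lam: "approx m M \<Longrightarrow> approx (RLam m) (Lam M)"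
| app: "approx m M \<Longrightarrow> approx n N \<Longrightarrow> approx (RApp m n) (App M N)"
| es: "approx m M \<Longrightarrow> approx n N \<Longrightarrow> approx (RES m n) (ES M N)"
| der: "approx m M \<Longrightarrow> approx (RDer m) (Der M)"
| bag: "(\<forall>m\<in>#B. approx m M) \<Longrightarrow> approx (RBag B) (Bang M)"

end

theory Submission
  imports Defs
begin

text \<open>Context steps are immediate, since
  approximation is compositional and surface contexts never enter a bang. For a root step,
  an approximant of a list context splits into approximants of its pieces, and the heart of
  the matter is a substitution lemma: every approximant of N{U/x} is a linear substitution
  of a bag of approximants of U into an approximant of N. The bag may be chosen with exactly
  as many elements as there are occurrences of x, because a bag of any size approximates !U.\<close>

inductive_cases approx_VarE: "approx n (Var x)"
inductive_cases approx_LamE: "approx n (Lam M)"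
inductive_cases approx_AppE: "approx n (App M N)"
inductive_cases approx_ESE: "approx n (ES M N)"
inductive_cases approx_BangE: "approx n (Bang M)"
inductive_cases approx_DerE: "approx n (Der M)"

lemma ex_image_mset_preimage:
  assumes "\<forall>b'\<in>#B'. \<exists>b. P b \<and> b' = f b"
  shows "\<exists>B. B' = image_mset f B \<and> (\<forall>b\<in>#B. P b)"
proof -
  from assms obtain g where g: "\<forall>b'\<in>#B'. P (g b') \<and> b' = f (g b')"
    by metis
  then have "image_mset f (image_mset g B') = B'"
    by (simp add: image_mset.compositionality image_mset_cong[of B' "f \<circ> g" id])
  with g show ?thesis
    by (intro exI[of _ "image_mset g B'"]) auto
qed

lemma approx_lift_inv:
  "approx n' (lift k c N) \<Longrightarrow> \<exists>n. approx n N \<and> n' = rlift k c n"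
proof (induction N arbitrary: c n')
  case (Var x)
  then show ?case by (intro exI[of _ "RVar x"]) (auto elim: approx_VarE intro: approx.var)
next
  case (Lam N)
  then show ?case by (auto elim!: approx_LamE) (metis approx.lam rlift.simps(2))
next
  case (App N1 N2)
  then show ?case by (auto elim!: approx_AppE) (metis approx.app rlift.simps(3))
next
  case (ES N1 N2)
  then show ?case by (auto elim!: approx_ESE) (metis approx.es rlift.simps(4))
next
  case (Bang N)
  from Bang.prems obtain B' where n': "n' = RBag B'" "\<forall>m\<in>#B'. approx m (lift k c N)"
    by (auto elim: approx_BangE)
  with Bang.IH have "\<forall>b'\<in>#B'. \<exists>b. approx b N \<and> b' = rlift k c b"
    by blast
  from ex_image_mset_preimage[OF this] obtain B
    where "B' = image_mset (rlift k c) B" "\<forall>b\<in>#B. approx b N"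
    by blast
  with n' show ?case
    by (intro exI[of _ "RBag B"]) (auto intro: approx.bag)
next
  case (Der N)
  then show ?case by (auto elim!: approx_DerE) (metis approx.der rlift.simps(5))
qed

lemma approx_lift_bag_inv:
  assumes "\<forall>b'\<in>#B'. approx b' (lift k c U)"
  obtains B where "B' = image_mset (rlift k c) B" and "\<forall>b\<in>#B. approx b U"
  using ex_image_mset_preimage[of B' "\<lambda>b. approx b U" "rlift k c"] assms approx_lift_inv
  by blast

lemma lsubst_RBag_collect:
  assumes "\<forall>r\<in>#R. \<exists>p B. P p \<and> (\<forall>b\<in>#B. Q b) \<and> lsubst p x B r"
  shows "\<exists>C B. (\<forall>p\<in>#C. P p) \<and> (\<forall>b\<in>#B. Q b) \<and> lsubst (RBag C) x B (RBag R)"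
  using assms
proof (induction R)
  case empty
  show ?case by (intro exI[of _ "{#}"]) (auto intro: lsubst.bag_empty)
next
  case (add r R)
  then obtain C B where CB: "\<forall>p\<in>#C. P p" "\<forall>b\<in>#B. Q b" "lsubst (RBag C) x B (RBag R)"
    by auto
  from add.prems obtain p B1 where "P p" "\<forall>b\<in>#B1. Q b" "lsubst p x B1 r"
    by auto
  with CB show ?case
    by (intro exI[of _ "add_mset p C"] exI[of _ "B1 + B"]) (auto intro: lsubst.bag_add)
qed

lemma approx_subst_inv:
  "approx r (subst P x U) \<Longrightarrow>
   \<exists>p B. approx p P \<and> (\<forall>b\<in>#B. approx b U) \<and> lsubst p x B r"
proof (induction P arbitrary: x U r)
  case (Var i)
  show ?case
  proof (cases "i = x")
    case True
    with Var show ?thesis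
      by (intro exI[of _ "RVar x"] exI[of _ "{#r#}"]) (auto intro: approx.var lsubst.var_hit)
  next
    case False
    with Var have "r = RVar (if x < i then i - 1 else i)"
      by (auto elim: approx_VarE split: if_splits)
    with lsubst.var_miss[OF False] show ?thesis
      by (intro exI[of _ "RVar i"] exI[of _ "{#}"]) (auto intro: approx.var)
  qed
next
  case (Lam P)
  from Lam.prems obtain r' where r: "r = RLam r'" "approx r' (subst P (Suc x) (lift 1 0 U))"
    by (auto elim: approx_LamE)
  from Lam.IH[OF r(2)] obtain p B' where
    p: "approx p P" "lsubst p (Suc x) B' r'" and B': "\<forall>b\<in>#B'. approx b (lift 1 0 U)"
    by blast
  from B' obtain B where "B' = image_mset (rlift 1 0) B" "\<forall>b\<in>#B. approx b U"
    by (rule approx_lift_bag_inv)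
  with p r show ?case
    by (intro exI[of _ "RLam p"] exI[of _ B]) (auto intro: approx.lam lsubst.lam)
next
  case (App P1 P2)
  from App.prems obtain r1 r2 where
    r: "r = RApp r1 r2" "approx r1 (subst P1 x U)" "approx r2 (subst P2 x U)"
    by (auto elim: approx_AppE)
  from App.IH(1)[OF r(2)] obtain p1 B1 where
    "approx p1 P1" "\<forall>b\<in>#B1. approx b U" "lsubst p1 x B1 r1"
    by blast
  moreover from App.IH(2)[OF r(3)] obtain p2 B2 where
    "approx p2 P2" "\<forall>b\<in>#B2. approx b U" "lsubst p2 x B2 r2"
    by blast
  ultimately show ?case using r
    by (intro exI[of _ "RApp p1 p2"] exI[of _ "B1 + B2"]) (auto intro: approx.app lsubst.app)
next
  case (ES P1 P2)
  from ES.prems obtain r1 r2 where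
    r: "r = RES r1 r2" "approx r1 (subst P1 (Suc x) (lift 1 0 U))" "approx r2 (subst P2 x U)"
    by (auto elim: approx_ESE)
  from ES.IH(1)[OF r(2)] obtain p1 B1' where
    p1: "approx p1 P1" "lsubst p1 (Suc x) B1' r1" and B1': "\<forall>b\<in>#B1'. approx b (lift 1 0 U)"
    by blast
  from B1' obtain B1 where "B1' = image_mset (rlift 1 0) B1" "\<forall>b\<in>#B1. approx b U"
    by (rule approx_lift_bag_inv)
  moreover from ES.IH(2)[OF r(3)] obtain p2 B2 where
    "approx p2 P2" "\<forall>b\<in>#B2. approx b U" "lsubst p2 x B2 r2"
    by blast
  ultimately show ?case using p1 r
    by (intro exI[of _ "RES p1 p2"] exI[of _ "B1 + B2"]) (auto intro: approx.es lsubst.es)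
next
  case (Bang P)
  from Bang.prems obtain R where r: "r = RBag R" "\<forall>m\<in>#R. approx m (subst P x U)"
    by (auto elim: approx_BangE)
  with Bang.IH have "\<forall>r\<in>#R. \<exists>p B. approx p P \<and> (\<forall>b\<in>#B. approx b U) \<and> lsubst p x B r"
    by blast
  from lsubst_RBag_collect[OF this] obtain C B where
    "\<forall>p\<in>#C. approx p P" "\<forall>b\<in>#B. approx b U" "lsubst (RBag C) x B (RBag R)"
    by blast
  with r show ?case
    by (intro exI[of _ "RBag C"] exI[of _ B]) (auto intro: approx.bag)
next
  case (Der P)
  from Der.prems obtain r' where r: "r = RDer r'" "approx r' (subst P x U)"
    by (auto elim: approx_DerE)
  from Der.IH[OF r(2)] obtain p B where "approx p P" "\<forall>b\<in>#B. approx b U" "lsubst p x B r'"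
    by blast
  with r show ?case
    by (intro exI[of _ "RDer p"] exI[of _ B]) (auto intro: approx.der lsubst.der)
qed

lemma plug_snoc: "plug (L @ [N]) t = ES (plug L t) N"
  by (simp add: plug_def)

lemma rplug_snoc: "rplug (l @ [n]) t = RES (rplug l t) n"
  by (simp add: rplug_def)

lemma approx_plug_inv:
  "approx n (plug L T) \<Longrightarrow>
   \<exists>l t. n = rplug l t \<and> length l = length L \<and> approx t T \<and> list_all2 approx l L"
proof (induction L arbitrary: n rule: rev_induct)
  case Nil
  then show ?case by (auto simp: plug_def rplug_def)
next
  case (snoc N L)
  from snoc.prems obtain n1 n2 where n: "n = RES n1 n2" "approx n1 (plug L T)" "approx n2 N"
    by (auto simp: plug_snoc elim: approx_ESE)
  from snoc.IH[OF n(2)] obtain l t where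
    "n1 = rplug l t" "length l = length L" "approx t T" "list_all2 approx l L"
    by blast
  with n show ?case
    by (intro exI[of _ "l @ [n2]"] exI[of _ t]) (auto simp: rplug_snoc list_all2_appendI)
qed

lemma approx_plug:
  "list_all2 approx l L \<Longrightarrow> approx t T \<Longrightarrow> approx (rplug l t) (plug L T)"
proof (induction l L arbitrary: t T rule: list_all2_induct)
  case Nil
  then show ?case by (simp add: plug_def rplug_def)
next
  case (Cons n l N L)
  then have "approx (RES t n) (ES T N)"
    by (auto intro: approx.es)
  with Cons.IH show ?case
    by (simp add: plug_def rplug_def)
qed

lemma root_step_approx_backward:
  assumes "root_step M N" and "approx n N"
  shows "\<exists>m. approx m M \<and> rroot_step m n"
  using assms(1)
proof cases
  case (dB L M0 N0)
  with assms(2) approx_plug_inv obtain l t where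
    lt: "n = rplug l t" "length l = length L" "list_all2 approx l L"
    and "approx t (ES M0 (lift (length L) 0 N0))"
    by blast
  then obtain m0 n0' where "t = RES m0 n0'" "approx m0 M0" "approx n0' (lift (length L) 0 N0)"
    by (auto elim: approx_ESE)
  moreover from this(3) obtain n0 where "approx n0 N0" "n0' = rlift (length L) 0 n0"
    using approx_lift_inv by blast
  ultimately show ?thesis using lt dB rroot_step.rdB[of l m0 n0]
    by (intro exI[of _ "RApp (rplug l (RLam m0)) n0"]) (auto intro!: approx.intros approx_plug)
next
  case (sBang M0 L N0)
  with assms(2) approx_plug_inv obtain l t where
    lt: "n = rplug l t" "length l = length L" "list_all2 approx l L"
    and "approx t (subst (lift (length L) 1 M0) 0 N0)"
    by blast
  then obtain p B where
    p: "approx p (lift (length L) 1 M0)" and B: "\<forall>b\<in>#B. approx b N0" "lsubst p 0 B t"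
    using approx_subst_inv by blast
  from approx_lift_inv[OF p] obtain m0 where "approx m0 M0" "p = rlift (length L) 1 m0"
    by blast
  with lt sBang B show ?thesis
    by (intro exI[of _ "RES m0 (rplug l (RBag B))"])
       (auto intro!: approx.intros approx_plug rroot_step.rsub)
next
  case (dBang L N0)
  with assms(2) approx_plug_inv obtain l t where
    "n = rplug l t" "approx t N0" "list_all2 approx l L"
    by blast
  with dBang show ?thesis
    by (intro exI[of _ "RDer (rplug l (RBag {#t#}))"])
       (auto intro!: approx.intros approx_plug rroot_step.rder)
qed

theorem mainTheorem4:
  assumes "surf_step M N"
      and "approx n N"
  shows "\<exists>m. approx m M \<and> rsurf_step m n"
  using assms
proof (induction arbitrary: n rule: surf_step.induct)
  case (root M N)
  then show ?case using root_step_approx_backward rsurf_step.root by blast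
next
  case (lam M N)
  then show ?case by (auto elim!: approx_LamE) (meson approx.lam rsurf_step.lam)
next
  case (appL M N P)
  then show ?case by (auto elim!: approx_AppE) (meson approx.app rsurf_step.appL)
next
  case (appR M N P)
  then show ?case by (auto elim!: approx_AppE) (meson approx.app rsurf_step.appR)
next
  case (esL M N P)
  then show ?case by (auto elim!: approx_ESE) (meson approx.es rsurf_step.esL)
next
  case (esR M N P)
  then show ?case by (auto elim!: approx_ESE) (meson approx.es rsurf_step.esR)
next
  case (der M N)
  then show ?case by (auto elim!: approx_DerE) (meson approx.der rsurf_step.der)
qed

end
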